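(* Let $q$ be an odd prime power, $\lambda$ a divisor of $q+1$ with $2\le\lambda<q+1$, $m=2t+1\ge5$, and $n=\frac{q^m+1}{\lambda}$. For integers $a,b,c$ let $f(a,b,c)=\frac{q^{t+1}+1}{\lambda}+a\frac{q^t-1}{\lambda}+bq^t+c$ and $g(a,b,c)=\frac{q^{t+1}-1}{\lambda}+a\frac{q^t+1}{\lambda}+bq^t+c$. If $t$ is even, let $T_1=\{f(0,0,c):c\in\mathbb{Z},-\frac q\lambda\le c\le\frac{q-2}{\lambda}\}$, $T_2=\{f(0,b,0):b\in\mathbb{Z},1\le b\le\frac{q-1}{\lambda}\}$, $T_3=\{f(2,b,0):b\in\mathbb{Z},0\le b\le\frac{q-3}{\lambda}\}$. If $t$ is odd, let $T_1=\{g(0,0,c):c\in\mathbb{Z},-\frac{q-2}{\lambda}\le c\le\frac q\lambda\}$, $T_2=\{g(0,b,0):b\in\mathbb{Z},1\le b\le\frac{q-1}{\lambda}\}$, $T_3=\{g(2,b,0):b\in\mathbb{Z},0\le b\le\frac{q-3}{\lambda}\}$. Then: (1) every integer $i$ with $1\le i<\frac{2q^{t+1}-2q+1}{\lambda}$, $i\not\equiv0\pmod q$ and $i\notin T_1\cup T_2\cup T_3$ is a coset leader modulo $n$ with $|C_i|=2m$, while no element of $T_1\cup T_2\cup T_3$ (with $i\not\equiv 0\pmod q$) is a coset leader modulo $n$; (2) no integer $i$ with $\frac{2q^{t+1}-2q+1}{\lambda}\le i\le\frac{2q^{t+1}+2q-1}{\lambda}$ is a coset leader modulo $n$.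
   Context: For $0\le s\le n-1$, $C_s=\{sq^i\bmod n:i\ge0\}$ is the $q$-cyclotomic coset of $s$ modulo $n$; its least element is its coset leader. *)

theory Defs
  imports "HOL-Computational_Algebra.Primes" Complex_Main
begin

definition cyc_coset :: "nat \<Rightarrow> nat \<Rightarrow> nat \<Rightarrow> nat set" where
  "cyc_coset q n s = {s * q ^ i mod n | i. True}"

definition coset_leader :: "nat \<Rightarrow> nat \<Rightarrow> nat \<Rightarrow> bool" where
  "coset_leader q n s \<longleftrightarrow> s < n \<and> s = Min (cyc_coset q n s)"

definition prime_power :: "nat \<Rightarrow> bool" where
  "prime_power q \<longleftrightarrow> (\<exists>p k. prime p \<and> k \<ge> 1 \<and> q = p ^ k)"

definition ffun :: "nat \<Rightarrow> nat \<Rightarrow> nat \<Rightarrow> int \<Rightarrow> int \<Rightarrow> int \<Rightarrow> int" where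
  "ffun q l t a b c = (int q ^ (t+1) + 1) div int l + a * ((int q ^ t - 1) div int l)
      + b * int q ^ t + c"

definition gfun :: "nat \<Rightarrow> nat \<Rightarrow> nat \<Rightarrow> int \<Rightarrow> int \<Rightarrow> int \<Rightarrow> int" where
  "gfun q l t a b c = (int q ^ (t+1) - 1) div int l + a * ((int q ^ t + 1) div int l)
      + b * int q ^ t + c"

definition Tset :: "nat \<Rightarrow> nat \<Rightarrow> nat \<Rightarrow> int set" where
  "Tset q l t = (if even t then
     {ffun q l t 0 0 c | c. - (real q / real l) \<le> real_of_int c \<and> real_of_int c \<le> (real q - 2) / real l}
     \<union> {ffun q l t 0 b 0 | b. 1 \<le> real_of_int b \<and> real_of_int b \<le> (real q - 1) / real l}
     \<union> {ffun q l t 2 b 0 | b. 0 \<le> real_of_int b \<and> real_of_int b \<le> (real q - 3) / real l}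
   else
     {gfun q l t 0 0 c | c. - ((real q - 2) / real l) \<le> real_of_int c \<and> real_of_int c \<le> real q / real l}
     \<union> {gfun q l t 0 b 0 | b. 1 \<le> real_of_int b \<and> real_of_int b \<le> (real q - 1) / real l}
     \<union> {gfun q l t 2 b 0 | b. 0 \<le> real_of_int b \<and> real_of_int b \<le> (real q - 3) / real l})"

end

(*
  Since l n = q^m + 1 =: N, multiplication by l maps the q-cyclotomic cosets modulo n
  order-preservingly onto those of multiples of l modulo N, so i is a coset leader modulo n
  iff s = l i is one modulo N.  As q^m = -1 modulo N, writing s = A q^k + B with B < q^k
  gives s q^(m-k) = B q^(m-k) - A and s q^(2m-k) = N - (B q^(m-k) - A) modulo N.  With
  P = q^t and s < 2qP - 2q, comparing sizes in the four ranges k < t, k = t, k = t + 1 and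
  k > t + 1 shows that all these residues exceed s unless s lies within q of qP or within 1
  of (q + a) P for some a < q.  These exceptional values are exactly the l i with i in
  T_1, T_2, T_3, and for them, as for every s within 2q of 2qP, one explicit power of q
  brings s below itself.  Since q^(2m) = 1 modulo N and the residues of s q^j grow strictly
  for 0 < j < 2m, the coset of a leader has exactly 2m elements.
*)
theory Submission
  imports Defs "HOL-Number_Theory.Cong"
begin

section \<open>Coset leaders under scaling\<close>

lemma cyc_coset_mult: "cyc_coset q (l * n) (l * s) = (\<lambda>x. l * x) ` cyc_coset q n s"
  unfolding cyc_coset_def by (auto simp flip: mult_mod_right simp: mult.assoc)

lemma finite_cyc_coset: "0 < n \<Longrightarrow> finite (cyc_coset q n s)"
  unfolding cyc_coset_def by (rule finite_subset[of _ "{..<n}"]) auto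

lemma coset_leader_mult_iff:
  assumes "0 < l"
  shows "coset_leader q (l * n) (l * s) \<longleftrightarrow> coset_leader q n s"
proof (cases "n = 0")
  case False
  have "s mod n \<in> cyc_coset q n s"
    unfolding cyc_coset_def by (auto intro: exI[of _ 0])
  then have "Min ((\<lambda>x. l * x) ` cyc_coset q n s) = l * Min (cyc_coset q n s)"
    using False by (intro mono_Min_commute[symmetric]) (auto simp: mono_def finite_cyc_coset)
  then show ?thesis
    unfolding coset_leader_def cyc_coset_mult using assms by simp
qed (simp add: coset_leader_def)

lemma card_cyc_coset_mult:
  "0 < l \<Longrightarrow> card (cyc_coset q (l * n) (l * s)) = card (cyc_coset q n s)"
  by (simp add: cyc_coset_mult card_image inj_on_def)

lemma not_coset_leader_if_mod_less:
  assumes "s * q ^ j mod n < s"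
  shows "\<not> coset_leader q n s"
proof
  assume "coset_leader q n s"
  then have "0 < n" and "s = Min (cyc_coset q n s)"
    unfolding coset_leader_def by auto
  moreover have "s * q ^ j mod n \<in> cyc_coset q n s"
    unfolding cyc_coset_def by blast
  ultimately have "s \<le> s * q ^ j mod n"
    using Min_le[OF finite_cyc_coset] by metis
  with assms show False by simp
qed

lemma not_coset_leader_if_dvd:
  fixes q n s M :: nat
  assumes "1 < q" "q dvd s" "0 < s" "0 < M" "q ^ M mod n = 1"
  shows "\<not> coset_leader q n s"
proof (cases "s < n")
  case True
  obtain s' where "s = q * s'"
    using assms(2) by blast
  then have "s' < s"
    using assms(1,3) by simp
  have "s * q ^ (M - 1) = s' * q ^ M"
    using \<open>s = q * s'\<close> assms(4) by (simp add: power_eq_if)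
  then have "s * q ^ (M - 1) mod n = s' mod n"
    using assms(5) by (metis mod_mult_right_eq mult.right_neutral)
  also have "\<dots> = s'"
    using \<open>s' < s\<close> True by simp
  finally have "s * q ^ (M - 1) mod n < s"
    using \<open>s' < s\<close> by simp
  then show ?thesis
    by (rule not_coset_leader_if_mod_less)
qed (simp add: coset_leader_def)

lemma mult_pow_mod_periodic:
  fixes q n s :: nat
  assumes "q ^ M mod n = 1"
  shows "s * q ^ j mod n = s * q ^ (j mod M) mod n"
proof -
  have "s * q ^ j = s * q ^ (j mod M) * (q ^ M) ^ (j div M)"
    by (metis power_add power_mult mod_mult_div_eq mult.assoc)
  also have "\<dots> mod n = s * q ^ (j mod M) * ((q ^ M) ^ (j div M) mod n) mod n"
    by (simp add: mod_mult_right_eq)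
  also have "(q ^ M) ^ (j div M) mod n = 1 mod n"
    using assms by (metis power_mod power_one)
  finally show ?thesis
    by (simp add: mod_mult_right_eq)
qed

lemma cyc_coset_eq_image:
  fixes q n s :: nat
  assumes "0 < M" and "q ^ M mod n = 1"
  shows "cyc_coset q n s = (\<lambda>j. s * q ^ j mod n) ` {..<M}"
proof
  show "cyc_coset q n s \<subseteq> (\<lambda>j. s * q ^ j mod n) ` {..<M}"
  proof
    fix y assume "y \<in> cyc_coset q n s"
    then obtain j where "y = s * q ^ j mod n"
      unfolding cyc_coset_def by blast
    then have "y = s * q ^ (j mod M) mod n"
      using mult_pow_mod_periodic[OF assms(2), of s j] by simp
    then show "y \<in> (\<lambda>j. s * q ^ j mod n) ` {..<M}"
      using assms(1) by (auto intro!: image_eqI[of _ _ "j mod M"])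
  qed
qed (auto simp: cyc_coset_def)

lemma coset_leader_if_orbit_increasing:
  assumes "s < n" and "0 < M" and period: "q ^ M mod n = 1"
    and increasing: "\<And>j. 0 < j \<Longrightarrow> j < M \<Longrightarrow> s < s * q ^ j mod n"
  shows "coset_leader q n s \<and> card (cyc_coset q n s) = M"
proof -
  define f where "f = (\<lambda>j. s * q ^ j mod n)"
  have "f 0 = s"
    using \<open>s < n\<close> by (simp add: f_def)
  have "Min (f ` {..<M}) = s"
  proof (rule Min_eqI)
    show "s \<in> f ` {..<M}"
      using \<open>f 0 = s\<close> \<open>0 < M\<close> by force
    show "s \<le> y" if y: "y \<in> f ` {..<M}" for y
    proof -
      obtain j where "j < M" "y = f j"
        using y by blast
      then show ?thesis
        using \<open>f 0 = s\<close> increasing[of j] by (cases "j = 0") (auto simp: f_def)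
    qed
  qed simp
  moreover have "inj_on f {..<M}"
  proof (rule linorder_inj_onI)
    fix a b assume "a < b" "b \<in> {..<M}"
    have "f (a + (M - b)) = f a * q ^ (M - b) mod n"
      by (simp add: f_def power_add mod_mult_left_eq mult.assoc)
    moreover have "f b * q ^ (M - b) mod n = s * q ^ M mod n"
      using \<open>b \<in> {..<M}\<close> by (simp add: f_def mod_mult_left_eq mult.assoc flip: power_add)
    moreover have "s * q ^ M mod n = s"
      using period \<open>s < n\<close> by (metis mod_mult_right_eq mult.right_neutral mod_less)
    moreover have "s < f (a + (M - b))"
      using \<open>a < b\<close> \<open>b \<in> {..<M}\<close> increasing[of "a + (M - b)"] by (simp add: f_def)
    ultimately show "f a \<noteq> f b"
      by auto
  qed auto
  ultimately show ?thesis
    using \<open>s < n\<close> cyc_coset_eq_image[OF \<open>0 < M\<close> period, of s]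
    by (simp add: coset_leader_def card_image f_def)
qed

section \<open>Residues modulo \<open>q ^ m + 1\<close> and size estimates\<close>

lemma mult_mod_Suc_self_eq:
  fixes x M :: nat
  assumes "0 < x" "x \<le> M"
  shows "x * M mod (M + 1) = M + 1 - x"
proof -
  obtain y where "x = Suc y"
    using assms(1) gr0_implies_Suc by blast
  then have "x * M = y * (M + 1) + (M - y)"
    using assms by (simp add: algebra_simps)
  then have "x * M mod (M + 1) = (M - y) mod (M + 1)"
    by (simp only: mod_mult_self3)
  then show ?thesis
    using \<open>x = Suc y\<close> by simp
qed

lemma power_double_mod_Suc:
  fixes q m :: nat
  assumes "0 < q"
  shows "q ^ (2 * m) mod (q ^ m + 1) = 1"
  using mult_mod_Suc_self_eq[of "q ^ m" "q ^ m"] assms by (simp add: power_mult_distrib mult_2 power_add)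

lemma mult_mod_Suc_prod_eq:
  fixes Q R s :: nat
  assumes "\<not> Q dvd s" and "s < Q * R"
  shows "s * R mod (Q * R + 1) = s mod Q * R - s div Q"
    and "s div Q < s mod Q * R"
proof -
  define A B where "A = s div Q" and "B = s mod Q"
  have "0 < Q"
    using assms(2) by (cases Q) auto
  then have "s = A * Q + B" "B < Q" "0 < B"
    using assms(1) by (auto simp: A_def B_def dvd_eq_mod_eq_0)
  have "A * Q \<le> s"
    by (simp add: A_def)
  then have "A * Q < R * Q"
    using assms(2) by (simp only: mult.commute[of R Q])
  then have "A < R"
    by (simp only: mult_less_cancel2)
  also have "R \<le> B * R"
    using \<open>0 < B\<close> by simp
  finally have "A < B * R" .
  then show "s div Q < s mod Q * R"
    by (simp add: A_def B_def)
  have "B * R < Q * R + 1"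
    using \<open>B < Q\<close> by (simp add: less_Suc_eq_le)
  have "s * R = A * (Q * R + 1) + (B * R - A)"
    using \<open>A < B * R\<close> \<open>s = A * Q + B\<close> by (simp add: algebra_simps)
  then have "s * R mod (Q * R + 1) = (B * R - A) mod (Q * R + 1)"
    by (simp only: mod_mult_self3)
  also have "\<dots> = B * R - A"
    using \<open>B * R < Q * R + 1\<close> by simp
  finally show "s * R mod (Q * R + 1) = s mod Q * R - s div Q"
    by (simp add: A_def B_def)
qed

lemma mult_pow_mod_rotate:
  fixes q s k r m :: nat
  assumes "k + r = m" and "\<not> q ^ k dvd s" and "s < q ^ m"
  shows "s * q ^ r mod (q ^ m + 1) = s mod q ^ k * q ^ r - s div q ^ k"
    and "s * q ^ (r + m) mod (q ^ m + 1) = q ^ m + 1 - (s mod q ^ k * q ^ r - s div q ^ k)"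
    and "s div q ^ k < s mod q ^ k * q ^ r"
proof -
  have m: "q ^ m = q ^ k * q ^ r"
    using assms(1) by (simp flip: power_add)
  note rot = mult_mod_Suc_prod_eq[of "q ^ k" s "q ^ r", folded m, OF assms(2,3)]
  then show first: "s * q ^ r mod (q ^ m + 1) = s mod q ^ k * q ^ r - s div q ^ k"
    and "s div q ^ k < s mod q ^ k * q ^ r"
    by simp_all
  have "0 < q ^ k"
    using assms(3) m by (cases "q ^ k = 0") auto
  then have "s mod q ^ k * q ^ r \<le> q ^ m"
    using m by simp
  have "s * q ^ (r + m) mod (q ^ m + 1) = (s * q ^ r mod (q ^ m + 1)) * q ^ m mod (q ^ m + 1)"
    by (simp add: power_add mod_mult_left_eq mult.assoc)
  also have "\<dots> = (s mod q ^ k * q ^ r - s div q ^ k) * q ^ m mod (q ^ m + 1)"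
    by (simp only: first)
  also have "\<dots> = q ^ m + 1 - (s mod q ^ k * q ^ r - s div q ^ k)"
    using rot(2) \<open>s mod q ^ k * q ^ r \<le> q ^ m\<close> by (intro mult_mod_Suc_self_eq) simp_all
  finally show "s * q ^ (r + m) mod (q ^ m + 1) = q ^ m + 1 - (s mod q ^ k * q ^ r - s div q ^ k)" .
qed

lemma div_mod_mult_add_eq:
  fixes A Q B :: nat
  assumes "B < Q"
  shows "(A * Q + B) div Q = A" and "(A * Q + B) mod Q = B"
  using assms by simp_all

lemma double_Suc_less_square:
  fixes q :: nat
  assumes "3 \<le> q"
  shows "2 * q + 2 < q * q"
proof -
  have "2 * q + 2 < 3 * q"
    using assms by simp
  also have "\<dots> \<le> q * q"
    using assms by simp
  finally show ?thesis .
qed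

lemma square_le_power:
  fixes q t :: nat
  assumes "2 \<le> t" "0 < q"
  shows "q * q \<le> q ^ t"
  using power_increasing[OF assms(1), of q] assms(2) by (simp add: power2_eq_square)

lemma double_Suc_less_power:
  fixes q t :: nat
  assumes "3 \<le> q" "2 \<le> t"
  shows "2 * q + 2 < q ^ t"
proof -
  have "q * q \<le> q ^ t"
    using assms by (intro square_le_power) simp_all
  then show ?thesis
    using double_Suc_less_square[OF assms(1)] by linarith
qed

lemma power_odd_eq_mult_square: "(q::nat) ^ (2 * t + 1) = q * q ^ t * q ^ t"
  by (simp add: mult_2 power_add)

lemma double_less_power_odd:
  fixes q t s :: nat
  assumes "3 \<le> q" "2 \<le> t" "s < 2 * q * q ^ t + 2 * q"
  shows "2 * s < q ^ (2 * t + 1)"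
proof -
  have "2 * q + 2 < q ^ t"
    using assms(1,2) by (rule double_Suc_less_power)
  then have "q * q ^ t * 5 < q * q ^ t * q ^ t"
    using assms(1) by (intro mult_strict_left_mono) simp_all
  moreover have "q * 4 \<le> q * q ^ t"
    using \<open>2 * q + 2 < q ^ t\<close> assms(1) by (intro mult_le_mono2) simp
  moreover have "2 * q * q ^ t = 2 * (q * q ^ t)"
    by simp
  ultimately show ?thesis
    using assms(3) power_odd_eq_mult_square[of q t] by linarith
qed

lemma dvd_power_diff_neg_one_power:
  fixes q l n :: nat
  assumes "l dvd q + 1"
  shows "int l dvd int q ^ n - (-1) ^ n"
proof -
  have "[int q = -1] (mod int l)"
    using assms by (simp add: cong_iff_dvd_diff add.commute flip: int_dvd_int_iff)
  then show ?thesis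
    using cong_pow cong_iff_dvd_diff by blast
qed

lemma not_dvd_mult_if_dvd_Suc:
  fixes q l i :: nat
  assumes "l dvd q + 1" "\<not> q dvd i"
  shows "\<not> q dvd l * i"
proof -
  have "coprime q l"
    using coprime_divisors[of q q l "q + 1"] assms(1) by simp
  then show ?thesis
    using assms(2) by (simp add: coprime_dvd_mult_right_iff)
qed

lemma dvd_power_Suc_if_dvd_Suc:
  fixes q l m :: nat
  assumes "l dvd q + 1" "odd m"
  shows "l dvd q ^ m + 1"
proof -
  have "int l dvd int (q ^ m + 1)"
    using dvd_power_diff_neg_one_power[OF assms(1), of m] assms(2) by (simp add: add.commute)
  then show ?thesis
    by (simp only: int_dvd_int_iff)
qed

section \<open>Leaders among the non-exceptional values\<close>

text \<open>For \<open>P = q ^ t\<close> these are the values \<open>l * i\<close> with \<open>i\<close> in \<open>T\<^sub>1 \<union> T\<^sub>2 \<union> T\<^sub>3\<close>, see \<open>Tset_iff_exceptional\<close>.\<close>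

definition exceptional :: "nat \<Rightarrow> nat \<Rightarrow> nat \<Rightarrow> bool" where
  "exceptional q P s \<longleftrightarrow>
     (\<exists>d. 0 < d \<and> d < q \<and> (s + d = q * P \<or> s = q * P + d)) \<or>
     (\<exists>a<q. s = (q + a) * P + 1 \<or> s + 1 = (q + a) * P)"

lemma rotation_bounds_low:
  fixes q P Q R s :: nat
  assumes "3 \<le> q" "0 < P" "q \<le> Q" "q * q * P \<le> R" "s \<le> 2 * q * P" "\<not> Q dvd s"
  shows "s + s div Q < s mod Q * R"
    and "s mod Q * R + s < Q * R + 1 + s div Q"
proof -
  define A B where "A = s div Q" and "B = s mod Q"
  have "s = A * Q + B" "B < Q" "0 < B"
    using assms by (auto simp: A_def B_def dvd_eq_mod_eq_0)
  have "(2 * q + 2) * (q * P) < q * q * (q * P)"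
    using double_Suc_less_square assms(1,2) by (intro mult_strict_right_mono) simp_all
  have "A * q \<le> A * Q"
    using \<open>q \<le> Q\<close> by (rule mult_le_mono2)
  then have "A * q \<le> s"
    using \<open>s = A * Q + B\<close> by linarith
  then have "q * (s + A) \<le> (q + 1) * s"
    by (simp add: algebra_simps)
  also have "\<dots> \<le> (q + 1) * (2 * q * P)"
    using assms(5) by (rule mult_le_mono2)
  also have "\<dots> < q * (q * q * P)"
    using \<open>(2 * q + 2) * (q * P) < q * q * (q * P)\<close> by (simp add: algebra_simps)
  finally have "s + A < q * q * P"
    by simp
  also have "\<dots> \<le> R"
    by (fact assms(4))
  also have "\<dots> \<le> B * R"
    using \<open>0 < B\<close> by simp
  finally show "s + s div Q < s mod Q * R"
    by (simp add: A_def B_def)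
  have "2 * q * P < q * q * P"
    using assms(1,2) by simp
  then have "s < R"
    using assms(4,5) by linarith
  have "(B + 1) * R \<le> Q * R"
    using \<open>B < Q\<close> by (intro mult_le_mono1) simp
  then have "B * R + R \<le> Q * R"
    by (simp only: add_mult_distrib mult_1_left)
  then show "s mod Q * R + s < Q * R + 1 + s div Q"
    using \<open>s < R\<close> unfolding B_def by linarith
qed

lemma rotation_bounds_high:
  fixes q P Q R s :: nat
  assumes "3 \<le> q" "q * q \<le> P" "q * q * P \<le> Q" "q \<le> R" "R * q \<le> P" "Q * R = q * P * P"
    and "0 < s" "s \<le> 2 * q * P"
  shows "s + s div Q < s mod Q * R"
    and "s mod Q * R + s < Q * R + 1 + s div Q"
proof -
  have "2 * q < P"
    using double_Suc_less_square[OF assms(1)] assms(2) by linarith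
  then have "2 * (P + q) < 3 * P"
    by simp
  also have "\<dots> \<le> q * P"
    using assms(1) by simp
  finally have "2 * (P + q) < q * P" .
  have "2 * q * P < q * q * P"
    using assms(1) \<open>2 * q < P\<close> by simp
  then have "s < Q"
    using assms(3,8) by linarith
  have "q * (s * R + s) \<le> s * (P + q)"
    using assms(5) mult_le_mono2[of "R * q" P s] by (simp add: algebra_simps)
  also have "\<dots> \<le> 2 * q * P * (P + q)"
    using assms(8) by simp
  also have "\<dots> = q * P * (2 * (P + q))"
    by (simp add: algebra_simps)
  also have "\<dots> < q * P * (q * P)"
    using \<open>2 * (P + q) < q * P\<close> assms(1) \<open>2 * q < P\<close> by (intro mult_strict_left_mono) simp_all
  also have "\<dots> = q * (Q * R)"
    using assms(6) by (simp add: algebra_simps)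
  finally have "s * R + s < Q * R"
    by simp
  moreover have "s < s * R"
    using assms(1,4,7) by simp
  moreover have "s div Q = 0" "s mod Q = s"
    using \<open>s < Q\<close> by simp_all
  ultimately show "s + s div Q < s mod Q * R" "s mod Q * R + s < Q * R + 1 + s div Q"
    by simp_all
qed

lemma rotation_bound_at_t:
  fixes q P s :: nat
  assumes "3 \<le> q" "q * q \<le> P" "s + 2 * q \<le> 2 * q * P" "\<not> P dvd s"
    and "\<not> exceptional q P s"
  shows "s + s div P < s mod P * (q * P)"
proof -
  define A B where "A = s div P" and "B = s mod P"
  have "q < P"
    using assms(1,2) mult_le_mono1[of 2 q q] by linarith
  then have "s = A * P + B" "0 < B"
    using assms(4) by (auto simp: A_def B_def dvd_eq_mod_eq_0)
  have "A * P < 2 * q * P"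
    using \<open>s = A * P + B\<close> assms(1,3) by linarith
  then have "A < 2 * q"
    by simp
  have "s + A < B * (q * P)"
  proof (cases "B = 1")
    case True
    have "A < q"
    proof (rule ccontr)
      assume "\<not> A < q"
      then have "s = (q + (A - q)) * P + 1" "A - q < q"
        using \<open>s = A * P + B\<close> True \<open>A < 2 * q\<close> by simp_all
      then show False
        using assms(5) unfolding exceptional_def by blast
    qed
    then have "(A + 1) * P \<le> q * P"
      by (intro mult_le_mono1) simp
    then have "A * P + P \<le> q * P"
      by (simp only: add_mult_distrib mult_1_left)
    then show ?thesis
      using \<open>s = A * P + B\<close> True \<open>A < q\<close> \<open>q < P\<close> by simp
  next
    case False
    then have "2 * (q * P) \<le> B * (q * P)"
      using \<open>0 < B\<close> by (intro mult_le_mono1) simp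
    then show ?thesis
      using \<open>A < 2 * q\<close> assms(3) mult.assoc[of 2 q P] by linarith
  qed
  then show ?thesis
    by (simp add: A_def B_def)
qed

lemma neg_rotation_bound_at_t:
  fixes q P s :: nat
  assumes "3 \<le> q" "q * q \<le> P" "s + 2 * q \<le> 2 * q * P" "\<not> exceptional q P s"
  shows "s mod P * (q * P) + s < P * (q * P) + 1 + s div P"
proof -
  define A B where "A = s div P" and "B = s mod P"
  have "q < P"
    using assms(1,2) mult_le_mono1[of 2 q q] by linarith
  then have "s = A * P + B" "B < P"
    by (simp_all add: A_def B_def)
  have "B * (q * P) + s < P * (q * P) + 1 + A"
  proof (cases "B + 1 = P")
    case True
    then have "(A + 1) * P = s + 1"
      using \<open>s = A * P + B\<close> by (simp add: algebra_simps)
    have "A + 1 < q"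
    proof (rule ccontr)
      assume "\<not> A + 1 < q"
      have "(A + 1) * P < 2 * q * P"
        using \<open>(A + 1) * P = s + 1\<close> assms(1,3) by linarith
      then have "A + 1 < 2 * q"
        by (metis mult_less_cancel2)
      then have "s + 1 = (q + (A + 1 - q)) * P" "A + 1 - q < q"
        using \<open>(A + 1) * P = s + 1\<close> \<open>\<not> A + 1 < q\<close> by simp_all
      then show False
        using assms(4) unfolding exceptional_def by blast
    qed
    then have "(A + 1) * P \<le> q * P"
      by (intro mult_le_mono1) simp
    moreover have "B * (q * P) + q * P = P * (q * P)"
      using True by (metis add_mult_distrib mult_1_left)
    ultimately show ?thesis
      using \<open>(A + 1) * P = s + 1\<close> by linarith
  next
    case False
    then have "(B + 2) * (q * P) \<le> P * (q * P)"
      using \<open>B < P\<close> by (intro mult_le_mono1) simp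
    then have "B * (q * P) + 2 * (q * P) \<le> P * (q * P)"
      by (simp only: add_mult_distrib)
    then show ?thesis
      using assms(3) mult.assoc[of 2 q P] by linarith
  qed
  then show ?thesis
    by (simp add: A_def B_def)
qed

lemma rotation_bounds_below_qP:
  fixes q P s :: nat
  assumes "q + 2 < P" "0 < s" "s < q * P" "\<not> exceptional q P s"
  shows "s < s * P" and "s * P + s < q * P * P + 1"
proof -
  have "s + q \<le> q * P"
  proof (rule ccontr)
    assume "\<not> s + q \<le> q * P"
    then have "s + (q * P - s) = q * P" "0 < q * P - s" "q * P - s < q"
      using assms(3) by linarith+
    then show False
      using assms(4) unfolding exceptional_def by blast
  qed
  then have "(s + q) * P \<le> q * P * P"
    by (rule mult_le_mono1)
  then have "s * P + q * P \<le> q * P * P"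
    by (simp only: add_mult_distrib)
  then show "s * P + s < q * P * P + 1"
    using assms(3) by linarith
  show "s < s * P"
    using assms(1,2) by simp
qed

lemma rotation_bounds_above_qP:
  fixes q P s B :: nat
  assumes "q + 2 < P" "s = q * P + B" "0 < B" "s + 2 * q \<le> 2 * q * P" "\<not> q dvd s"
    and "\<not> exceptional q P s"
  shows "s + 1 < B * P" and "B * P + s < q * P * P + 2"
proof -
  have "q < B"
  proof (rule ccontr)
    assume "\<not> q < B"
    moreover have "B \<noteq> q"
      using assms(2,5) by auto
    ultimately show False
      using assms(2,3,6) unfolding exceptional_def by auto
  qed
  obtain P' where "P = P' + 1"
    using assms(1) by (metis add.commute less_imp_Suc_add plus_1_eq_Suc)
  have "(q + 1) * P' \<le> B * P'"
    using \<open>q < B\<close> by (intro mult_le_mono1) simp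
  then have "q * P' + P' \<le> B * P'"
    by (simp only: add_mult_distrib mult_1_left)
  moreover have "B * P = B * P' + B" "q * P = q * P' + q"
    using \<open>P = P' + 1\<close> by simp_all
  ultimately show "s + 1 < B * P"
    using assms(1,2) \<open>P = P' + 1\<close> by linarith
  have "B + 2 * q \<le> q * P"
    using assms(2,4) mult.assoc[of 2 q P] by linarith
  then have "(B + 2 * q) * P \<le> q * P * P"
    by (rule mult_le_mono1)
  then have "B * P + 2 * (q * P) \<le> q * P * P"
    by (simp add: algebra_simps)
  then show "B * P + s < q * P * P + 2"
    using assms(2) \<open>B + 2 * q \<le> q * P\<close> by linarith
qed

lemma rotation_bounds_at_Suc_t:
  fixes q P s :: nat
  assumes "3 \<le> q" "q * q \<le> P" "s + 2 * q \<le> 2 * q * P" "\<not> q dvd s"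
    and "\<not> exceptional q P s"
  shows "s + s div (q * P) < s mod (q * P) * P"
    and "s mod (q * P) * P + s < q * P * P + 1 + s div (q * P)"
proof -
  define A B where "A = s div (q * P)" and "B = s mod (q * P)"
  have "q + 2 < P"
    using assms(1,2) mult_le_mono1[of 3 q q] by linarith
  moreover have "\<not> q * P dvd s"
    using assms(4) dvd_mult_left by blast
  ultimately have "B < q * P" "0 < B"
    using assms(1) by (auto simp: B_def dvd_eq_mod_eq_0)
  have "s = A * (q * P) + B"
    unfolding A_def B_def by (rule div_mult_mod_eq[symmetric])
  then have "A * (q * P) < 2 * (q * P)"
    using assms(1,3) mult.assoc[of 2 q P] by linarith
  then consider "A = 0" | "A = 1"
    by fastforce
  then have "s + A < B * P \<and> B * P + s < q * P * P + 1 + A"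
  proof cases
    case 1
    then have "s = B"
      using \<open>s = A * (q * P) + B\<close> by simp
    then show ?thesis
      using rotation_bounds_below_qP[OF \<open>q + 2 < P\<close> _ _ assms(5)] \<open>0 < B\<close> \<open>B < q * P\<close> 1
      by simp
  next
    case 2
    then have "s = q * P + B"
      using \<open>s = A * (q * P) + B\<close> by simp
    then show ?thesis
      using rotation_bounds_above_qP[OF \<open>q + 2 < P\<close> _ \<open>0 < B\<close> assms(3,4,5)] 2 by simp
  qed
  then show "s + s div (q * P) < s mod (q * P) * P"
    and "s mod (q * P) * P + s < q * P * P + 1 + s div (q * P)"
    by (simp_all add: A_def B_def)
qed

lemma rotation_bounds:
  fixes q t s k r :: nat
  assumes "3 \<le> q" "2 \<le> t" "s + 2 * q \<le> 2 * q * q ^ t" "\<not> q dvd s"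
    and "\<not> exceptional q (q ^ t) s" "0 < k" "0 < r" "k + r = 2 * t + 1"
  shows "s + s div q ^ k < s mod q ^ k * q ^ r"
    and "s mod q ^ k * q ^ r + s < q ^ (2 * t + 1) + 1 + s div q ^ k"
proof -
  define P where "P = q ^ t"
  have pow_Suc_Suc: "q ^ (t + 2) = q * q * P"
    by (simp add: P_def power_add power2_eq_square)
  have "q * q \<le> P" "s \<le> 2 * q * P"
    using square_le_power assms(1-3) by (simp_all add: P_def)
  have "\<not> q ^ k dvd s"
    using assms(4,6) dvd_power[of k q] dvd_trans by blast
  have "s + s div q ^ k < s mod q ^ k * q ^ r
        \<and> s mod q ^ k * q ^ r + s < q ^ k * q ^ r + 1 + s div q ^ k"
  proof -
    consider "k < t" | "k = t" | "k = t + 1" | "t + 1 < k"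
      by linarith
    then show ?thesis
    proof cases
      case 1
      have "q \<le> q ^ k"
        using assms(1,6) by (simp add: self_le_power)
      moreover have "q * q * P \<le> q ^ r"
        unfolding pow_Suc_Suc[symmetric] using 1 assms(1,8) by (intro power_increasing) simp_all
      ultimately show ?thesis
        using rotation_bounds_low[OF assms(1) _ _ _ \<open>s \<le> 2 * q * P\<close> \<open>\<not> q ^ k dvd s\<close>] assms(1)
        by (simp add: P_def)
    next
      case 2
      then have "q ^ k = P" "q ^ r = q * P"
        using assms(8) by (simp_all add: P_def)
      then show ?thesis
        using rotation_bound_at_t[OF assms(1) \<open>q * q \<le> P\<close> _ _ assms(5)[folded P_def]]
          neg_rotation_bound_at_t[OF assms(1) \<open>q * q \<le> P\<close> _ assms(5)[folded P_def]]
          assms(3) \<open>\<not> q ^ k dvd s\<close> by (simp add: P_def)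
    next
      case 3
      then have "q ^ k = q * P" "q ^ r = P"
        using assms(8) by (simp_all add: P_def)
      then show ?thesis
        using rotation_bounds_at_Suc_t[OF assms(1) \<open>q * q \<le> P\<close> _ assms(4) assms(5)[folded P_def]]
          assms(3) by (simp add: P_def mult.assoc)
    next
      case 4
      have "q * q * P \<le> q ^ k"
        unfolding pow_Suc_Suc[symmetric] using 4 assms(1) by (intro power_increasing) simp_all
      moreover have "q \<le> q ^ r"
        using assms(1,7) by (simp add: self_le_power)
      moreover have "q ^ r * q \<le> P"
        unfolding P_def power_Suc2[symmetric] using 4 assms(1,8) by (intro power_increasing) simp_all
      moreover have "q ^ k * q ^ r = q * P * P"
        using assms(8) power_odd_eq_mult_square[of q t] by (simp add: P_def flip: power_add)
      moreover have "0 < s"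
        using assms(4) by (rule contrapos_pp) simp
      ultimately show ?thesis
        using rotation_bounds_high[OF assms(1) \<open>q * q \<le> P\<close>] \<open>s \<le> 2 * q * P\<close> by blast
    qed
  qed
  moreover have "q ^ (2 * t + 1) = q ^ k * q ^ r"
    using assms(8) by (simp flip: power_add)
  ultimately show "s + s div q ^ k < s mod q ^ k * q ^ r"
    and "s mod q ^ k * q ^ r + s < q ^ (2 * t + 1) + 1 + s div q ^ k"
    by simp_all
qed

lemma orbit_increasing_if_not_exceptional:
  fixes q t s j :: nat
  assumes "3 \<le> q" "2 \<le> t" "s + 2 * q \<le> 2 * q * q ^ t" "\<not> q dvd s"
    and "\<not> exceptional q (q ^ t) s" "0 < j" "j < 2 * (2 * t + 1)"
  shows "s < s * q ^ j mod (q ^ (2 * t + 1) + 1)"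
proof -
  define m where "m = 2 * t + 1"
  have "2 * s < q ^ m"
    unfolding m_def using assms(1,3) by (intro double_less_power_odd[OF assms(1,2)]) linarith
  then have "s < q ^ m"
    by linarith
  consider "j < m" | "j = m" | "m < j"
    by linarith
  then have "s < s * q ^ j mod (q ^ m + 1)"
  proof cases
    case 1
    have "\<not> q ^ (m - j) dvd s"
      using assms(4) 1 dvd_power[of "m - j" q] dvd_trans by fastforce
    note rotate = mult_pow_mod_rotate[of "m - j" j m, OF _ this \<open>s < q ^ m\<close>]
    have "s + s div q ^ (m - j) < s mod q ^ (m - j) * q ^ j"
      using rotation_bounds(1)[OF assms(1-5), of "m - j" j] 1 assms(6) by (simp add: m_def)
    then show ?thesis
      using rotate(1) 1 by simp
  next
    case 2
    have "0 < s"
      using assms(4) by (metis dvd_0_right gr0I)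
    then have "s * q ^ m mod (q ^ m + 1) = q ^ m + 1 - s"
      using \<open>s < q ^ m\<close> by (intro mult_mod_Suc_self_eq) simp_all
    then show ?thesis
      using 2 \<open>2 * s < q ^ m\<close> by simp
  next
    case 3
    define r where "r = j - m"
    have "j = r + m" "0 < r" "r < m"
      using 3 assms(7) by (simp_all add: r_def m_def)
    have "\<not> q ^ (m - r) dvd s"
      using assms(4) \<open>r < m\<close> dvd_power[of "m - r" q] dvd_trans by fastforce
    note rotate = mult_pow_mod_rotate[of "m - r" r m, OF _ this \<open>s < q ^ m\<close>]
    have "s mod q ^ (m - r) * q ^ r + s < q ^ m + 1 + s div q ^ (m - r)"
      using rotation_bounds(2)[OF assms(1-5), of "m - r" r] \<open>0 < r\<close> \<open>r < m\<close>
      by (simp add: m_def)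
    moreover have "s * q ^ j mod (q ^ m + 1)
        = q ^ m + 1 - (s mod q ^ (m - r) * q ^ r - s div q ^ (m - r))"
      using rotate(2) \<open>r < m\<close> \<open>j = r + m\<close> by simp
    ultimately show ?thesis
      using rotate(3) \<open>r < m\<close> by linarith
  qed
  then show ?thesis
    by (simp only: m_def)
qed

lemma coset_leader_if_not_exceptional:
  fixes q t s :: nat
  assumes "3 \<le> q" "2 \<le> t" "s + 2 * q \<le> 2 * q * q ^ t" "\<not> q dvd s"
    and "\<not> exceptional q (q ^ t) s"
  shows "coset_leader q (q ^ (2 * t + 1) + 1) s
    \<and> card (cyc_coset q (q ^ (2 * t + 1) + 1) s) = 2 * (2 * t + 1)"
proof (rule coset_leader_if_orbit_increasing)
  have "2 * s < q ^ (2 * t + 1)"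
    using assms(1,3) by (intro double_less_power_odd[OF assms(1,2)]) linarith
  then show "s < q ^ (2 * t + 1) + 1"
    by linarith
  show "q ^ (2 * (2 * t + 1)) mod (q ^ (2 * t + 1) + 1) = 1"
    using assms(1) by (intro power_double_mod_Suc) simp
  show "s < s * q ^ j mod (q ^ (2 * t + 1) + 1)" if "0 < j" "j < 2 * (2 * t + 1)" for j
    using orbit_increasing_if_not_exceptional[OF assms that] .
qed simp

section \<open>Non-leaders\<close>

lemma not_coset_leader_plus_one:
  fixes q t a s :: nat
  assumes "3 \<le> q" "2 \<le> t" "a < q" "s = (q + a) * q ^ t + 1"
  shows "\<not> coset_leader q (q ^ (2 * t + 1) + 1) s"
proof -
  define P where "P = q ^ t"
  have "2 * q + 2 < P"
    using double_Suc_less_power assms(1,2) by (simp add: P_def)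
  have "(q + a) * P < 2 * q * P"
    using assms(3) \<open>2 * q + 2 < P\<close> by (intro mult_strict_right_mono) simp_all
  then have "s < 2 * q * P + 2 * q"
    using assms(1,4)[folded P_def] by linarith
  then have "2 * s < q ^ (2 * t + 1)"
    using double_less_power_odd[OF assms(1,2)] unfolding P_def by blast
  moreover have "s div P = q + a" "s mod P = 1"
    unfolding assms(4) P_def[symmetric] using \<open>2 * q + 2 < P\<close>
    by (intro div_mod_mult_add_eq; linarith)+
  ultimately have "s * q ^ (t + 1) mod (q ^ (2 * t + 1) + 1) = q * P - (q + a)"
    using mult_pow_mod_rotate(1)[of t "t + 1" "2 * t + 1" q s]
    by (simp add: P_def dvd_eq_mod_eq_0)
  also have "\<dots> < s"
    using assms(4)[folded P_def] mult_le_mono1[of q "q + a" P] by linarith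
  finally show ?thesis
    by (rule not_coset_leader_if_mod_less)
qed

lemma not_coset_leader_minus_one:
  fixes q t a s :: nat
  assumes "3 \<le> q" "2 \<le> t" "0 < a" "a < q" "s + 1 = (q + a) * q ^ t"
  shows "\<not> coset_leader q (q ^ (2 * t + 1) + 1) s"
proof -
  define P c where "P = q ^ t" and "c = q + a - 1"
  have "2 * q + 2 < P"
    using double_Suc_less_power assms(1,2) by (simp add: P_def)
  have "q + a = c + 1"
    using assms(3) c_def by simp
  then have "(q + a) * P = c * P + P"
    by simp
  then have s: "s = c * P + (P - 1)"
    using assms(5)[folded P_def] \<open>2 * q + 2 < P\<close> by linarith
  have "P - 1 + 1 = P"
    using \<open>2 * q + 2 < P\<close> by simp
  then have "(P - 1 + 1) * (q * P) = q ^ (2 * t + 1)"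
    by (simp only: power_odd_eq_mult_square[of q t, folded P_def]) (simp only: mult_ac)
  then have power_split: "(P - 1) * (q * P) + q * P = q ^ (2 * t + 1)"
    by (simp only: add_mult_distrib mult_1_left)
  have "(q + a) * P < 2 * q * P"
    using assms(4) \<open>2 * q + 2 < P\<close> by (intro mult_strict_right_mono) simp_all
  then have "s < 2 * q * P + 2 * q"
    using assms(5)[folded P_def] by linarith
  then have "2 * s < q ^ (2 * t + 1)"
    using double_less_power_odd[OF assms(1,2)] unfolding P_def by blast
  moreover have "s div P = c" "s mod P = P - 1"
    unfolding s using \<open>2 * q + 2 < P\<close> by (intro div_mod_mult_add_eq; linarith)+
  ultimately have "s * q ^ (t + 1 + (2 * t + 1)) mod (q ^ (2 * t + 1) + 1)
      = q ^ (2 * t + 1) + 1 - ((P - 1) * (q * P) - c)" and "c < (P - 1) * (q * P)"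
    using mult_pow_mod_rotate(2,3)[of t "t + 1" "2 * t + 1" q s] \<open>2 * q + 2 < P\<close>
    by (simp_all add: P_def dvd_eq_mod_eq_0)
  moreover have "q * P \<le> c * P"
    using assms(3) c_def by (intro mult_le_mono1) simp
  ultimately have "s * q ^ (t + 1 + (2 * t + 1)) mod (q ^ (2 * t + 1) + 1) < s"
    using s power_split \<open>2 * q + 2 < P\<close> assms(4) c_def by linarith
  then show ?thesis
    by (rule not_coset_leader_if_mod_less)
qed

lemma not_coset_leader_above:
  fixes q t d s :: nat
  assumes "3 \<le> q" "2 \<le> t" "0 < d" "d < q" "s = q * q ^ t + d"
  shows "\<not> coset_leader q (q ^ (2 * t + 1) + 1) s"
proof -
  define P where "P = q ^ t"
  have "2 * q + 2 < P"
    using double_Suc_less_power assms(1,2) by (simp add: P_def)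
  have "s = 1 * (q * P) + d"
    using assms(5) by (simp add: P_def)
  then have "s div (q * P) = 1" "s mod (q * P) = d"
    using assms(1,4) \<open>2 * q + 2 < P\<close> mult_le_mono2[of 1 P q]
    by (simp_all only: div_mod_mult_add_eq[of d "q * P"]) (simp_all add: less_le_trans)
  have "s < 2 * q * q ^ t + 2 * q"
    using assms(4,5) mult.assoc[of 2 q "q ^ t"] by linarith
  then have "2 * s < q ^ (2 * t + 1)"
    by (rule double_less_power_odd[OF assms(1,2)])
  then have "s * q ^ t mod (q ^ (2 * t + 1) + 1) = d * P - 1"
    using mult_pow_mod_rotate(1)[of "t + 1" t "2 * t + 1" q s] \<open>s div (q * P) = 1\<close>
      \<open>s mod (q * P) = d\<close> assms(3) by (simp add: P_def dvd_eq_mod_eq_0)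
  also have "\<dots> < s"
    using mult_strict_right_mono[OF assms(4), of P] \<open>2 * q + 2 < P\<close> \<open>s = 1 * (q * P) + d\<close>
    by linarith
  finally show ?thesis
    by (rule not_coset_leader_if_mod_less)
qed

lemma not_coset_leader_below:
  fixes q t d s :: nat
  assumes "3 \<le> q" "2 \<le> t" "0 < d" "d < q" "s + d = q * q ^ t"
  shows "\<not> coset_leader q (q ^ (2 * t + 1) + 1) s"
proof -
  define P where "P = q ^ t"
  have "2 * q + 2 < P"
    using double_Suc_less_power assms(1,2) by (simp add: P_def)
  have "q * 1 \<le> q * P"
    using \<open>2 * q + 2 < P\<close> by (intro mult_le_mono2) simp
  then have "0 < s" "s < q * P"
    using assms(3,4,5)[folded P_def] by linarith+
  then have "s div (q * P) = 0" "s mod (q * P) = s"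
    by simp_all
  have "s < 2 * q * q ^ t + 2 * q"
    using assms(4,5) mult.assoc[of 2 q "q ^ t"] by linarith
  then have "2 * s < q ^ (2 * t + 1)"
    by (rule double_less_power_odd[OF assms(1,2)])
  then have "s * q ^ (t + (2 * t + 1)) mod (q ^ (2 * t + 1) + 1) = q ^ (2 * t + 1) + 1 - s * P"
    using mult_pow_mod_rotate(2)[of "t + 1" t "2 * t + 1" q s] \<open>s div (q * P) = 0\<close>
      \<open>s mod (q * P) = s\<close> \<open>0 < s\<close> by (simp add: P_def dvd_eq_mod_eq_0)
  also have "\<dots> < s"
  proof -
    have "(s + d) * P = q ^ (2 * t + 1)"
      by (simp only: assms(5)[folded P_def] power_odd_eq_mult_square[of q t, folded P_def])
    then have "s * P + d * P = q ^ (2 * t + 1)"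
      by (simp only: add_mult_distrib)
    moreover have "(d + 1) * P \<le> q * P"
      using assms(4) by (intro mult_le_mono1) simp
    then have "d * P + P \<le> q * P"
      by (simp only: add_mult_distrib mult_1_left)
    ultimately show ?thesis
      using assms(4,5)[folded P_def] \<open>2 * q + 2 < P\<close> by linarith
  qed
  finally show ?thesis
    by (rule not_coset_leader_if_mod_less)
qed

lemma not_coset_leader_below_double:
  fixes q t s :: nat
  assumes "3 \<le> q" "2 \<le> t" "q * q ^ t < s" "s < 2 * q * q ^ t" "2 * q * q ^ t < s + 2 * q"
  shows "\<not> coset_leader q (q ^ (2 * t + 1) + 1) s"
proof -
  define P B where "P = q ^ t" and "B = s - q * P"
  have "2 * q + 2 < P"
    using double_Suc_less_power assms(1,2) by (simp add: P_def)
  have "s = 1 * (q * P) + B" "B < q * P"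
    using assms(3,4) by (simp_all add: B_def P_def)
  then have "s div (q * P) = 1" "s mod (q * P) = B"
    by (simp_all only: div_mod_mult_add_eq)
  have "0 < B"
    using assms(3) by (simp add: B_def P_def)
  have "2 * s < q ^ (2 * t + 1)"
    using assms(4) by (intro double_less_power_odd[OF assms(1,2)]) simp
  then have "s * q ^ (t + (2 * t + 1)) mod (q ^ (2 * t + 1) + 1) = q ^ (2 * t + 1) + 1 - (B * P - 1)"
    and "1 < B * P"
    using mult_pow_mod_rotate(2,3)[of "t + 1" t "2 * t + 1" q s] \<open>s div (q * P) = 1\<close>
      \<open>s mod (q * P) = B\<close> \<open>0 < B\<close> by (simp_all add: P_def dvd_eq_mod_eq_0)
  moreover have "(q * P + 1) * P \<le> (B + 2 * q) * P"
    using assms(3,5) mult.assoc[of 2 q P] unfolding B_def P_def by (intro mult_le_mono1) linarith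
  then have "q * P * P + P \<le> B * P + 2 * q * P"
    by (simp only: add_mult_distrib mult_1_left)
  ultimately have "s * q ^ (t + (2 * t + 1)) mod (q ^ (2 * t + 1) + 1) < s"
    using assms(3,5) \<open>2 * q + 2 < P\<close> power_odd_eq_mult_square[of q t, folded P_def]
    unfolding P_def by linarith
  then show ?thesis
    by (rule not_coset_leader_if_mod_less)
qed

lemma not_coset_leader_above_double:
  fixes q t s :: nat
  assumes "3 \<le> q" "2 \<le> t" "2 * q * q ^ t < s" "s < 2 * q * q ^ t + 2 * q"
  shows "\<not> coset_leader q (q ^ (2 * t + 1) + 1) s"
proof -
  define P B where "P = q ^ t" and "B = s - 2 * (q * P)"
  have "2 * q + 2 < P"
    using double_Suc_less_power assms(1,2) by (simp add: P_def)
  have "B < 2 * q" "0 < B"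
    using assms(3,4) by (simp_all add: B_def P_def)
  moreover have "q * 2 \<le> q * P"
    using \<open>2 * q + 2 < P\<close> by (intro mult_le_mono2) simp
  ultimately have "s = 2 * (q * P) + B" "B < q * P"
    using assms(3) mult.assoc[of 2 q P] unfolding B_def P_def by linarith+
  then have "s div (q * P) = 2" "s mod (q * P) = B"
    by (simp_all only: div_mod_mult_add_eq)
  have "2 * s < q ^ (2 * t + 1)"
    using assms(4) by (rule double_less_power_odd[OF assms(1,2)])
  then have "s * q ^ t mod (q ^ (2 * t + 1) + 1) = B * P - 2"
    using mult_pow_mod_rotate(1)[of "t + 1" t "2 * t + 1" q s] \<open>s div (q * P) = 2\<close>
      \<open>s mod (q * P) = B\<close> \<open>0 < B\<close> by (simp add: P_def dvd_eq_mod_eq_0)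
  also have "\<dots> < s"
    using mult_strict_right_mono[OF \<open>B < 2 * q\<close>, of P] \<open>2 * q + 2 < P\<close> assms(3)
    unfolding P_def by linarith
  finally show ?thesis
    by (rule not_coset_leader_if_mod_less)
qed

lemma not_coset_leader_if_exceptional:
  fixes q t s :: nat
  assumes "3 \<le> q" "2 \<le> t" "exceptional q (q ^ t) s"
  shows "\<not> coset_leader q (q ^ (2 * t + 1) + 1) s"
  using assms(3) unfolding exceptional_def
proof (elim disjE exE conjE)
  fix d assume "0 < d" "d < q" "s + d = q * q ^ t"
  then show ?thesis
    using assms(1,2) by (rule not_coset_leader_below[rotated 2])
next
  fix d assume "0 < d" "d < q" "s = q * q ^ t + d"
  then show ?thesis
    using assms(1,2) by (rule not_coset_leader_above[rotated 2])
next
  fix a assume "a < q" "s = (q + a) * q ^ t + 1"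
  then show ?thesis
    using assms(1,2) by (rule not_coset_leader_plus_one[rotated 2])
next
  fix a assume "a < q" "s + 1 = (q + a) * q ^ t"
  then show ?thesis
    using assms(1,2) not_coset_leader_minus_one[of q t a s] not_coset_leader_below[of q t 1 s]
    by (cases "a = 0") simp_all
qed

lemma not_coset_leader_near_double:
  fixes q t s :: nat
  assumes "3 \<le> q" "2 \<le> t" "2 * q * q ^ t < s + 2 * q" "s < 2 * q * q ^ t + 2 * q"
  shows "\<not> coset_leader q (q ^ (2 * t + 1) + 1) s"
proof -
  have "2 * q + 2 < q ^ t"
    using assms(1,2) by (rule double_Suc_less_power)
  then have "q * 2 \<le> q * q ^ t"
    by (intro mult_le_mono2) simp
  then have "q * q ^ t < s"
    using assms(3) mult.assoc[of 2 q "q ^ t"] by linarith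
  consider "q dvd s" | "\<not> q dvd s" "s < 2 * q * q ^ t" | "2 * q * q ^ t < s"
    using mult.assoc[of 2 q "q ^ t"] by fastforce
  then show ?thesis
  proof cases
    case 1
    show ?thesis
      using assms(1) 1 \<open>q * q ^ t < s\<close> power_double_mod_Suc[of q "2 * t + 1"]
      by (intro not_coset_leader_if_dvd[where M = "2 * (2 * t + 1)"]) simp_all
  next
    case 2
    then show ?thesis
      using not_coset_leader_below_double[OF assms(1,2) \<open>q * q ^ t < s\<close> _ assms(3)] by blast
  qed (rule not_coset_leader_above_double[OF assms(1,2) _ assms(4)])
qed

section \<open>The sets \<open>T\<^sub>1\<close>, \<open>T\<^sub>2\<close>, \<open>T\<^sub>3\<close>\<close>

text \<open>\<open>l \<cdot> (T\<^sub>1 \<union> T\<^sub>2 \<union> T\<^sub>3)\<close>, written for both parities of \<open>t\<close> at once with \<open>e = (-1) ^ t\<close>.\<close>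

definition scaled_Tset :: "int \<Rightarrow> int \<Rightarrow> int \<Rightarrow> int \<Rightarrow> int set" where
  "scaled_Tset q l P e =
     {q * P + e + l * c | c. 1 - q \<le> e + l * c \<and> e + l * c \<le> q - 1}
     \<union> {q * P + e + l * b * P | b. 1 \<le> b \<and> l * b \<le> q - 1}
     \<union> {q * P + e + 2 * (P - e) + l * b * P | b. 0 \<le> b \<and> l * b \<le> q - 3}"

lemma of_int_le_divide_iff:
  fixes l :: nat and c y :: int
  assumes "0 < l"
  shows "real_of_int c \<le> real_of_int y / real l \<longleftrightarrow> int l * c \<le> y"
  using assms by (simp add: pos_le_divide_eq mult.commute flip: of_int_le_iff[where 'a=real])

lemma neg_divide_le_of_int_iff:
  fixes l :: nat and c y :: int
  assumes "0 < l"
  shows "- (real_of_int y / real l) \<le> real_of_int c \<longleftrightarrow> - y \<le> int l * c"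
  using of_int_le_divide_iff[OF assms, of "- c" y] by (simp add: minus_le_iff)

lemma mult_div_add_eq:
  fixes l X Y a b c P :: int
  assumes "l \<noteq> 0" "l dvd X" "l dvd Y"
  shows "l * (X div l + a * (Y div l) + b * P + c) = X + a * Y + l * b * P + l * c"
  using assms by (auto simp: algebra_simps)

lemma ffun_scaled:
  fixes q l t :: nat and a b c :: int
  assumes "0 < l" "l dvd q + 1" "even t"
  shows "int l * ffun q l t a b c
    = int q * int q ^ t + 1 + a * (int q ^ t - 1) + int l * b * int q ^ t + int l * c"
proof -
  have "int l dvd int q ^ (t + 1) + 1" "int l dvd int q ^ t - 1"
    using dvd_power_diff_neg_one_power[OF assms(2), of "t + 1"]
      dvd_power_diff_neg_one_power[OF assms(2), of t] assms(3) by simp_all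
  then show ?thesis
    using mult_div_add_eq[of "int l" _ _ a b "int q ^ t" c] assms(1) unfolding ffun_def by simp
qed

lemma gfun_scaled:
  fixes q l t :: nat and a b c :: int
  assumes "0 < l" "l dvd q + 1" "odd t"
  shows "int l * gfun q l t a b c
    = int q * int q ^ t - 1 + a * (int q ^ t + 1) + int l * b * int q ^ t + int l * c"
proof -
  have "int l dvd int q ^ (t + 1) - 1" "int l dvd int q ^ t + 1"
    using dvd_power_diff_neg_one_power[OF assms(2), of "t + 1"]
      dvd_power_diff_neg_one_power[OF assms(2), of t] assms(3) by simp_all
  then show ?thesis
    using mult_div_add_eq[of "int l" _ _ a b "int q ^ t" c] assms(1) unfolding gfun_def by simp
qed

lemma mem_Collect_scale_iff:
  fixes l i :: int and f g :: "int \<Rightarrow> int"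
  assumes "l \<noteq> 0" "\<And>c. l * f c = g c" "\<And>c. R c \<longleftrightarrow> R' c"
  shows "i \<in> {f c | c. R c} \<longleftrightarrow> l * i \<in> {g c | c. R' c}"
  using assms(1) by (simp add: assms(3) flip: assms(2))

lemma Tset_iff_scaled:
  fixes q l t :: nat and i :: int
  assumes "0 < l" "l dvd q + 1"
  shows "i \<in> Tset q l t \<longleftrightarrow> int l * i \<in> scaled_Tset (int q) (int l) (int q ^ t) ((-1) ^ t)"
proof -
  have "int l \<noteq> 0"
    using assms(1) by simp
  have b_bounds:
    "1 \<le> real_of_int b \<and> real_of_int b \<le> (real q - 1) / real l
       \<longleftrightarrow> 1 \<le> b \<and> int l * b \<le> int q - 1"
    "0 \<le> real_of_int b \<and> real_of_int b \<le> (real q - 3) / real l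
       \<longleftrightarrow> 0 \<le> b \<and> int l * b \<le> int q - 3" for b
    using of_int_le_divide_iff[OF assms(1), of b "int q - 1"]
      of_int_le_divide_iff[OF assms(1), of b "int q - 3"] by simp_all
  show ?thesis
  proof (cases "even t")
    case True
    have c_bounds: "- (real q / real l) \<le> real_of_int c \<and> real_of_int c \<le> (real q - 2) / real l
       \<longleftrightarrow> 1 - int q \<le> (-1) ^ t + int l * c \<and> (-1) ^ t + int l * c \<le> int q - 1" for c
      using of_int_le_divide_iff[OF assms(1), of c "int q - 2"]
        neg_divide_le_of_int_iff[OF assms(1), of "int q" c] True by auto
    show ?thesis
      unfolding Tset_def if_P[OF True] scaled_Tset_def Un_iff
      by (intro arg_cong2[where f = "(\<or>)"] mem_Collect_scale_iff[OF \<open>int l \<noteq> 0\<close>])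
        (simp add: ffun_scaled[OF assms True] True, rule c_bounds,
         simp add: ffun_scaled[OF assms True] True, rule b_bounds(1),
         simp add: ffun_scaled[OF assms True] True algebra_simps, rule b_bounds(2))
  next
    case False
    have c_bounds: "- ((real q - 2) / real l) \<le> real_of_int c \<and> real_of_int c \<le> real q / real l
       \<longleftrightarrow> 1 - int q \<le> (-1) ^ t + int l * c \<and> (-1) ^ t + int l * c \<le> int q - 1" for c
      using of_int_le_divide_iff[OF assms(1), of c "int q"]
        neg_divide_le_of_int_iff[OF assms(1), of "int q - 2" c] False by auto
    show ?thesis
      unfolding Tset_def if_not_P[OF False] scaled_Tset_def Un_iff
      by (intro arg_cong2[where f = "(\<or>)"] mem_Collect_scale_iff[OF \<open>int l \<noteq> 0\<close>])
        (simp add: gfun_scaled[OF assms False] False, rule c_bounds,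
         simp add: gfun_scaled[OF assms False] False, rule b_bounds(1),
         simp add: gfun_scaled[OF assms False] False algebra_simps, rule b_bounds(2))
  qed
qed

definition exceptional_int :: "int \<Rightarrow> int \<Rightarrow> int \<Rightarrow> bool" where
  "exceptional_int q P s \<longleftrightarrow>
     (\<exists>d. 0 < \<bar>d\<bar> \<and> \<bar>d\<bar> < q \<and> s = q * P + d) \<or>
     (\<exists>a \<sigma>. 0 \<le> a \<and> a < q \<and> \<bar>\<sigma>\<bar> = 1 \<and> s = (q + a) * P + \<sigma>)"

lemma exceptional_int_if_exceptional:
  fixes q P s :: nat
  assumes "exceptional q P s"
  shows "exceptional_int (int q) (int P) (int s)"
proof -
  consider (below) d where "0 < d" "d < q" "s + d = q * P"
    | (above) d where "0 < d" "d < q" "s = q * P + d"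
    | (plus) a where "a < q" "s = (q + a) * P + 1"
    | (minus) a where "a < q" "s + 1 = (q + a) * P"
    using assms unfolding exceptional_def by blast
  then show ?thesis
  proof cases
    case below
    then have "int s = int q * int P + - int d"
      using arg_cong[OF below(3), of int] by simp
    then show ?thesis
      using below unfolding exceptional_int_def by (intro disjI1 exI[of _ "- int d"]) simp
  next
    case above
    then show ?thesis
      unfolding exceptional_int_def by (intro disjI1 exI[of _ "int d"]) simp
  next
    case plus
    then show ?thesis
      unfolding exceptional_int_def by (intro disjI2 exI[of _ "int a"] exI[of _ 1]) simp
  next
    case minus
    then have "int s = (int q + int a) * int P + - 1"
      using arg_cong[OF minus(2), of int] by simp
    then show ?thesis
      using minus unfolding exceptional_int_def by (intro disjI2 exI[of _ "int a"] exI[of _ "- 1"]) simp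
  qed
qed

lemma exceptional_if_exceptional_int:
  fixes q P s :: nat
  assumes "exceptional_int (int q) (int P) (int s)"
  shows "exceptional q P s"
  using assms unfolding exceptional_int_def
proof (elim disjE exE conjE)
  fix d assume d: "0 < \<bar>d\<bar>" "\<bar>d\<bar> < int q" "int s = int q * int P + d"
  show ?thesis
  proof (cases "0 < d")
    case True
    then have "int s = int (q * P + nat d)"
      using d(3) by simp
    then have "s = q * P + nat d"
      by (simp only: of_nat_eq_iff)
    then show ?thesis
      using True d(2) unfolding exceptional_def by (intro disjI1 exI[of _ "nat d"]) simp
  next
    case False
    then have "int (s + nat (- d)) = int (q * P)"
      using d(1,3) by simp
    then have "s + nat (- d) = q * P"
      by (simp only: of_nat_eq_iff)
    then show ?thesis
      using False d(1,2) unfolding exceptional_def by (intro disjI1 exI[of _ "nat (- d)"]) simp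
  qed
next
  fix a \<sigma> assume a: "0 \<le> a" "a < int q" "\<bar>\<sigma>\<bar> = 1" "int s = (int q + a) * int P + \<sigma>"
  then have "int s = int ((q + nat a) * P + 1) \<or> int (s + 1) = int ((q + nat a) * P)"
    by (cases "0 \<le> \<sigma>") simp_all
  then have "s = (q + nat a) * P + 1 \<or> s + 1 = (q + nat a) * P"
    by (simp only: of_nat_eq_iff)
  then show ?thesis
    using a(1,2) unfolding exceptional_def by (intro disjI2 exI[of _ "nat a"]) simp
qed

lemma exceptional_iff_int: "exceptional q P s \<longleftrightarrow> exceptional_int (int q) (int P) (int s)"
  using exceptional_int_if_exceptional exceptional_if_exceptional_int by blast

lemma abs_mult_ne_one:
  fixes l c :: int
  assumes "2 \<le> l"
  shows "\<bar>l * c\<bar> \<noteq> 1"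
proof (cases "c = 0")
  case False
  then have "l * 1 \<le> l * \<bar>c\<bar>"
    using assms by (intro mult_left_mono) simp_all
  moreover have "\<bar>l * c\<bar> = l * \<bar>c\<bar>"
    using assms by (simp add: abs_mult)
  ultimately show ?thesis
    using assms by linarith
qed simp

lemma dvd_if_dvd_mult_congruent_unit:
  fixes l x P e :: int
  assumes "\<bar>e\<bar> = 1" "l dvd P - e" "l dvd x * P"
  shows "l dvd x"
proof -
  have "l dvd x * P - x * (P - e)"
    using assms(2,3) by simp
  then have "l dvd x * e * e"
    by (simp add: algebra_simps)
  moreover have "e * e = 1"
    using abs_mult_self_eq[of e] assms(1) by simp
  ultimately show ?thesis
    by (simp add: mult.assoc)
qed

lemma exceptional_int_if_mem_scaled_Tset:
  fixes Q P S l e :: int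
  assumes "2 \<le> l" "\<bar>e\<bar> = 1" "S \<in> scaled_Tset Q l P e"
  shows "exceptional_int Q P S"
  using assms(3) unfolding scaled_Tset_def
proof (elim UnE CollectE exE conjE)
  fix c assume "S = Q * P + e + l * c" "1 - Q \<le> e + l * c" "e + l * c \<le> Q - 1"
  moreover have "e + l * c \<noteq> 0"
  proof
    assume "e + l * c = 0"
    then have "\<bar>l * c\<bar> = \<bar>e\<bar>"
      by (simp add: eq_neg_iff_add_eq_0 add.commute)
    then show False
      using abs_mult_ne_one[OF assms(1), of c] assms(2) by simp
  qed
  ultimately have "0 < \<bar>e + l * c\<bar>" "\<bar>e + l * c\<bar> < Q" "S = Q * P + (e + l * c)"
    by (simp_all add: abs_less_iff)
  then show ?thesis
    unfolding exceptional_int_def by blast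
next
  fix b assume "S = Q * P + e + l * b * P" "1 \<le> b" "l * b \<le> Q - 1"
  moreover have "0 \<le> l * b"
    using assms(1) \<open>1 \<le> b\<close> by simp
  moreover have "S = (Q + l * b) * P + e"
    using \<open>S = Q * P + e + l * b * P\<close> by (simp add: distrib_right)
  ultimately show ?thesis
    using assms(2) unfolding exceptional_int_def by (intro disjI2 exI[of _ "l * b"] exI[of _ e]) simp
next
  fix b assume "S = Q * P + e + 2 * (P - e) + l * b * P" "0 \<le> b" "l * b \<le> Q - 3"
  moreover have "0 \<le> l * b"
    using assms(1) \<open>0 \<le> b\<close> by simp
  moreover have "S = (Q + (2 + l * b)) * P + - e"
    using \<open>S = Q * P + e + 2 * (P - e) + l * b * P\<close> by (simp add: algebra_simps)
  ultimately show ?thesis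
    using assms(2) unfolding exceptional_int_def by (intro disjI2 exI[of _ "2 + l * b"] exI[of _ "- e"]) simp
qed

lemma mem_scaled_Tset_near:
  fixes Q P S l e d :: int
  assumes "l dvd S - (Q * P + e)" "\<bar>d\<bar> < Q" "S = Q * P + d"
  shows "S \<in> scaled_Tset Q l P e"
proof -
  obtain c where "S - (Q * P + e) = l * c"
    using assms(1) by (rule dvdE)
  then have "S = Q * P + e + l * c" "e + l * c = d"
    using assms(3) by simp_all
  moreover have "1 - Q \<le> d" "d \<le> Q - 1"
    using assms(2) by simp_all
  ultimately show ?thesis
    unfolding scaled_Tset_def by blast
qed

lemma mem_scaled_Tset_shifted:
  fixes Q P S l e a \<sigma> :: int
  assumes "2 \<le> l" "\<bar>e\<bar> = 1" "l dvd P - e" "l dvd S - (Q * P + e)"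
    and "0 < a" "a < Q" "\<bar>\<sigma>\<bar> = 1" "S = (Q + a) * P + \<sigma>"
  shows "S \<in> scaled_Tset Q l P e"
proof (cases "\<sigma> = e")
  case True
  then have "l dvd a * P"
    using assms(4,8) by (simp add: algebra_simps)
  then have "l dvd a"
    by (rule dvd_if_dvd_mult_congruent_unit[OF assms(2,3)])
  then obtain b where "a = l * b"
    by (rule dvdE)
  then have "1 \<le> b"
    using assms(1,5) by (simp add: zero_less_mult_iff)
  moreover have "S = Q * P + e + l * b * P"
    using True \<open>a = l * b\<close> assms(8) by (simp add: algebra_simps)
  moreover have "l * b \<le> Q - 1"
    using \<open>a = l * b\<close> assms(6) by simp
  ultimately show ?thesis
    unfolding scaled_Tset_def by blast
next
  case False
  then have "\<sigma> = - e"
    using assms(2,7) by linarith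
  then have "S - (Q * P + e) - 2 * (P - e) = (a - 2) * P"
    using assms(8) by (simp add: algebra_simps)
  moreover have "l dvd S - (Q * P + e) - 2 * (P - e)"
    by (rule dvd_diff[OF assms(4) dvd_mult[OF assms(3)]])
  ultimately have "l dvd (a - 2) * P"
    by simp
  then have "l dvd a - 2"
    by (rule dvd_if_dvd_mult_congruent_unit[OF assms(2,3)])
  then obtain b where "a - 2 = l * b"
    by (rule dvdE)
  moreover have "0 \<le> b"
  proof (rule ccontr)
    assume "\<not> 0 \<le> b"
    then have "l * b \<le> l * (-1)"
      using assms(1) by (intro mult_left_mono) simp_all
    then show False
      using assms(1,5) \<open>a - 2 = l * b\<close> by linarith
  qed
  moreover have "S = Q * P + e + 2 * (P - e) + l * b * P"
    using \<open>\<sigma> = - e\<close> \<open>a - 2 = l * b\<close> assms(8) by (simp add: algebra_simps)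
  moreover have "l * b \<le> Q - 3"
    using \<open>a - 2 = l * b\<close> assms(6) by simp
  ultimately show ?thesis
    unfolding scaled_Tset_def by blast
qed

lemma scaled_Tset_iff:
  fixes Q P S l e :: int
  assumes "2 \<le> l" "\<bar>e\<bar> = 1" "2 \<le> Q" "l dvd Q + 1" "l dvd P - e" "l dvd S"
  shows "S \<in> scaled_Tset Q l P e \<longleftrightarrow> exceptional_int Q P S"
proof
  show "exceptional_int Q P S" if "S \<in> scaled_Tset Q l P e"
    using exceptional_int_if_mem_scaled_Tset[OF assms(1,2) that] .
next
  have "l dvd (Q + 1) * P - (P - e)"
    using assms(4,5) by simp
  then have base: "l dvd S - (Q * P + e)"
    using assms(6) by (simp add: algebra_simps)
  assume "exceptional_int Q P S"
  then show "S \<in> scaled_Tset Q l P e"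
    unfolding exceptional_int_def
  proof (elim disjE exE conjE)
    fix d assume "0 < \<bar>d\<bar>" "\<bar>d\<bar> < Q" "S = Q * P + d"
    then show ?thesis
      using mem_scaled_Tset_near[OF base] by blast
  next
    fix a \<sigma> assume "0 \<le> a" "a < Q" "\<bar>\<sigma>\<bar> = 1" "S = (Q + a) * P + \<sigma>"
    then show ?thesis
      using mem_scaled_Tset_near[OF base, of \<sigma>] mem_scaled_Tset_shifted[OF assms(1,2,5) base]
        assms(3) by (cases "a = 0") simp_all
  qed
qed

lemma Tset_iff_exceptional:
  fixes q l t i :: nat
  assumes "2 \<le> q" "2 \<le> l" "l dvd q + 1"
  shows "int i \<in> Tset q l t \<longleftrightarrow> exceptional q (q ^ t) (l * i)"
proof -
  have "int i \<in> Tset q l t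
      \<longleftrightarrow> int (l * i) \<in> scaled_Tset (int q) (int l) (int (q ^ t)) ((-1) ^ t)"
    using Tset_iff_scaled[OF _ assms(3), where t = t and i = "int i"] assms(2) by simp
  also have "\<dots> \<longleftrightarrow> exceptional q (q ^ t) (l * i)"
    unfolding exceptional_iff_int
  proof (rule scaled_Tset_iff)
    show "int l dvd int q + 1"
      using assms(3) by (simp add: add.commute flip: int_dvd_int_iff)
    show "int l dvd int (q ^ t) - (-1) ^ t"
      using dvd_power_diff_neg_one_power[OF assms(3)] by simp
  qed (use assms in simp_all)
  finally show ?thesis .
qed

lemma scaled_real_bounds:
  fixes q t l i :: nat
  assumes "0 < l"
  shows "real i < (2 * real q ^ (t + 1) - 2 * real q + 1) / real l \<longleftrightarrow> l * i + 2 * q \<le> 2 * q * q ^ t"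
    and "(2 * real q ^ (t + 1) - 2 * real q + 1) / real l \<le> real i \<longleftrightarrow> 2 * q * q ^ t < l * i + 2 * q"
    and "real i \<le> (2 * real q ^ (t + 1) + 2 * real q - 1) / real l \<longleftrightarrow> l * i < 2 * q * q ^ t + 2 * q"
proof -
  have "real i < (2 * real q ^ (t + 1) - 2 * real q + 1) / real l
      \<longleftrightarrow> real (l * i + 2 * q) < real (2 * q * q ^ t + 1)"
    using assms by (simp add: pos_less_divide_eq algebra_simps)
  then show "real i < (2 * real q ^ (t + 1) - 2 * real q + 1) / real l \<longleftrightarrow> l * i + 2 * q \<le> 2 * q * q ^ t"
    by (simp only: of_nat_less_iff) linarith
  have "(2 * real q ^ (t + 1) - 2 * real q + 1) / real l \<le> real i
      \<longleftrightarrow> real (2 * q * q ^ t + 1) \<le> real (l * i + 2 * q)"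
    using assms by (simp add: pos_divide_le_eq algebra_simps)
  then show "(2 * real q ^ (t + 1) - 2 * real q + 1) / real l \<le> real i \<longleftrightarrow> 2 * q * q ^ t < l * i + 2 * q"
    by (simp only: of_nat_le_iff) linarith
  have "real i \<le> (2 * real q ^ (t + 1) + 2 * real q - 1) / real l
      \<longleftrightarrow> real (l * i + 1) \<le> real (2 * q * q ^ t + 2 * q)"
    using assms by (simp add: pos_le_divide_eq algebra_simps)
  then show "real i \<le> (2 * real q ^ (t + 1) + 2 * real q - 1) / real l \<longleftrightarrow> l * i < 2 * q * q ^ t + 2 * q"
    by (simp only: of_nat_le_iff) linarith
qed

theorem lemma12:
  fixes q l m t n :: nat
  assumes "prime_power q" and "odd q"
    and "l dvd q + 1" and "2 \<le> l" and "l < q + 1"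
    and "m = 2 * t + 1" and "m \<ge> 5"
    and "n = (q ^ m + 1) div l"
  shows "(\<forall>i::nat. 1 \<le> i \<and> real i < (2 * real q ^ (t+1) - 2 * real q + 1) / real l
              \<and> \<not> q dvd i \<and> int i \<notin> Tset q l t
            \<longrightarrow> coset_leader q n i \<and> card (cyc_coset q n i) = 2 * m)
       \<and> (\<forall>i::nat. int i \<in> Tset q l t \<and> \<not> q dvd i \<longrightarrow> \<not> coset_leader q n i)
       \<and> (\<forall>i::nat. (2 * real q ^ (t+1) - 2 * real q + 1) / real l \<le> real i
              \<and> real i \<le> (2 * real q ^ (t+1) + 2 * real q - 1) / real l
            \<longrightarrow> \<not> coset_leader q n i)"
proof -
  have "3 \<le> q" "2 \<le> t" "0 < l"
    using assms(2,4-7) by (auto elim!: oddE)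
  have "l dvd q ^ m + 1"
    using dvd_power_Suc_if_dvd_Suc[OF assms(3), of m] assms(6) by simp
  then have "l * n = q ^ (2 * t + 1) + 1"
    using assms(6,8) dvd_mult_div_cancel by blast
  then have leader: "coset_leader q n i \<longleftrightarrow> coset_leader q (q ^ (2 * t + 1) + 1) (l * i)"
    and card: "card (cyc_coset q n i) = card (cyc_coset q (q ^ (2 * t + 1) + 1) (l * i))" for i
    using coset_leader_mult_iff card_cyc_coset_mult \<open>0 < l\<close> by metis+
  have exceptional: "int i \<in> Tset q l t \<longleftrightarrow> exceptional q (q ^ t) (l * i)" for i
    using Tset_iff_exceptional assms(3,4) \<open>3 \<le> q\<close> by simp
  note bounds = scaled_real_bounds[OF \<open>0 < l\<close>, where q = q and t = t]
  have "coset_leader q n i \<and> card (cyc_coset q n i) = 2 * m"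
    if "real i < (2 * real q ^ (t + 1) - 2 * real q + 1) / real l" "\<not> q dvd i"
      and "int i \<notin> Tset q l t" for i
    using that coset_leader_if_not_exceptional[OF \<open>3 \<le> q\<close> \<open>2 \<le> t\<close>, of "l * i"]
      not_dvd_mult_if_dvd_Suc[OF assms(3) that(2)]
    unfolding leader card bounds(1) exceptional assms(6) by simp
  moreover have "\<not> coset_leader q n i" if "int i \<in> Tset q l t" for i
    using that not_coset_leader_if_exceptional[OF \<open>3 \<le> q\<close> \<open>2 \<le> t\<close>]
    unfolding leader exceptional by simp
  moreover have "\<not> coset_leader q n i"
    if "(2 * real q ^ (t + 1) - 2 * real q + 1) / real l \<le> real i"
      and "real i \<le> (2 * real q ^ (t + 1) + 2 * real q - 1) / real l" for i
    using that not_coset_leader_near_double[OF \<open>3 \<le> q\<close> \<open>2 \<le> t\<close>]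
    unfolding leader bounds(2,3) by simp
  ultimately show ?thesis
    by blast
qed

end
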